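(* Let $F\colon[a,b]\to\mathbb{R}$ be continuous and suppose that $LD_1F(x)$ exists and is finite for all $x\in[a,b]$ outside a countable set. Then $LD_1F$ (defined arbitrarily on the exceptional countable set) is Laplace integrable on $[a,b]$ and $\int_a^xLD_1F=F(x)-F(a)$ for all $x\in[a,b]$.
   Context: Laplace derivative: for $F$ Perron integrable near $x$, $LD_1F(x)$ is the common value, when both exist and are equal, of $\lim_{s\to\infty}s^2\int_0^\delta e^{-st}[F(x+t)-F(x)]dt$ and $\lim_{s\to\infty}(-s^2)\int_0^\delta e^{-st}[F(x-t)-F(x)]dt$ for some $\delta>0$ (independent of $\delta$; one-sided at endpoints). Lower/upper Laplace derivates $\underline{LD}_1F,\overline{LD}_1F$ are defined with $\liminf$/$\limsup$ in place of $\lim$, taking the minimum (resp. maximum) over the two sides. Laplace integral: a major function of $f\colon[a,b]\to\mathbb{R}$ is a continuous $U$ with $\underline{LD}_1U\geqslant f$ and $\underline{LD}_1U>-\infty$ everywhere on $[a,b]$; a minor function is a continuous $V$ with $\overline{LD}_1V\leqslant f$ and $\overline{LD}_1V<\infty$ everywhere; $f$ is Laplace integrable if $\sup_V(V(b)-V(a))=\inf_U(U(b)-U(a))$ is finite, this value being $\int_a^bf$. *)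

theory Defs
  imports "HOL-Analysis.Analysis" "HOL-Library.Extended_Real"
begin

text \<open>Laplace transforms of the right and left increments of F at x, for the parameter s,
  over [0, d]. The integral is the Henstock-Kurzweil (= Perron) integral.\<close>

definition lap_right :: "(real \<Rightarrow> real) \<Rightarrow> real \<Rightarrow> real \<Rightarrow> real \<Rightarrow> real" where
  "lap_right F x d s = s\<^sup>2 * integral {0..d} (\<lambda>t. exp (- s * t) * (F (x + t) - F x))"

definition lap_left :: "(real \<Rightarrow> real) \<Rightarrow> real \<Rightarrow> real \<Rightarrow> real \<Rightarrow> real" where
  "lap_left F x d s = - (s\<^sup>2) * integral {0..d} (\<lambda>t. exp (- s * t) * (F (x - t) - F x))"

definition laplace_deriv :: "real \<Rightarrow> real \<Rightarrow> (real \<Rightarrow> real) \<Rightarrow> real \<Rightarrow> real \<Rightarrow> bool" where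
  "laplace_deriv a b F x L \<longleftrightarrow>
     (x < b \<longrightarrow> (\<exists>d. 0 < d \<and> x + d \<le> b \<and> (lap_right F x d \<longlongrightarrow> L) at_top)) \<and>
     (a < x \<longrightarrow> (\<exists>d. 0 < d \<and> a \<le> x - d \<and> (lap_left F x d \<longlongrightarrow> L) at_top))"

text \<open>Lower / upper Laplace derivates relative to [a,b]; the value does not depend on delta
  for continuous F, so the maximal admissible delta is used.\<close>

definition lower_LD :: "real \<Rightarrow> real \<Rightarrow> (real \<Rightarrow> real) \<Rightarrow> real \<Rightarrow> ereal" where
  "lower_LD a b F x =
     min (if x < b then Liminf at_top (\<lambda>s. ereal (lap_right F x (b - x) s)) else \<infinity>)
         (if a < x then Liminf at_top (\<lambda>s. ereal (lap_left F x (x - a) s)) else \<infinity>)"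

definition upper_LD :: "real \<Rightarrow> real \<Rightarrow> (real \<Rightarrow> real) \<Rightarrow> real \<Rightarrow> ereal" where
  "upper_LD a b F x =
     max (if x < b then Limsup at_top (\<lambda>s. ereal (lap_right F x (b - x) s)) else - \<infinity>)
         (if a < x then Limsup at_top (\<lambda>s. ereal (lap_left F x (x - a) s)) else - \<infinity>)"

definition laplace_major :: "(real \<Rightarrow> real) \<Rightarrow> real \<Rightarrow> real \<Rightarrow> (real \<Rightarrow> real) \<Rightarrow> bool" where
  "laplace_major f a b U \<longleftrightarrow> continuous_on {a..b} U \<and>
     (\<forall>x\<in>{a..b}. ereal (f x) \<le> lower_LD a b U x \<and> lower_LD a b U x > - \<infinity>)"

definition laplace_minor :: "(real \<Rightarrow> real) \<Rightarrow> real \<Rightarrow> real \<Rightarrow> (real \<Rightarrow> real) \<Rightarrow> bool" where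
  "laplace_minor f a b V \<longleftrightarrow> continuous_on {a..b} V \<and>
     (\<forall>x\<in>{a..b}. upper_LD a b V x \<le> ereal (f x) \<and> upper_LD a b V x < \<infinity>)"

definition laplace_has_integral :: "(real \<Rightarrow> real) \<Rightarrow> real \<Rightarrow> real \<Rightarrow> real \<Rightarrow> bool" where
  "laplace_has_integral f a b I \<longleftrightarrow>
     (SUP V\<in>{V. laplace_minor f a b V}. ereal (V b - V a)) = ereal I \<and>
     (INF U\<in>{U. laplace_major f a b U}. ereal (U b - U a)) = ereal I"

definition laplace_integrable :: "(real \<Rightarrow> real) \<Rightarrow> real \<Rightarrow> real \<Rightarrow> bool" where
  "laplace_integrable f a b \<longleftrightarrow> (\<exists>I. laplace_has_integral f a b I)"

end

(*
  Adding to F a continuous nondecreasing function \<Phi> never lowers the lower Laplace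
  derivates, and if \<Phi> rises faster than |F(c + t) - F c| + sqrt t on both sides of c, then
  F + \<Phi> has lower Laplace derivate +\<infinity> at c. A series of small bumps, one for each point of
  the countable exceptional set, gives such a \<Phi> with total increase at most \<epsilon>. Hence F + \<Phi> is
  a major and F - \<Phi> a minor function of LD F, and their increments over [a, b] are within \<epsilon>
  of F b - F a. It remains to see that no minor increment exceeds a major one: at a maximum
  point of a continuous function its right Laplace transforms are nonpositive, and for
  U - V + \<eta> x they are eventually positive everywhere, so this function is maximal at b.
*)

theory Submission
  imports Defs "HOL-Real_Asymp.Real_Asymp"
begin

section \<open>Laplace transforms of increments\<close>

lemma continuous_on_translate_Icc:
  fixes G :: "real \<Rightarrow> 'a::topological_space"
  assumes "continuous_on {x..x+d} G"
  shows "continuous_on {0..d} (\<lambda>t. G (x + t))"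
  by (rule continuous_on_compose2[OF assms]) (auto intro!: continuous_intros)

lemma lap_right_integrable:
  fixes G :: "real \<Rightarrow> real"
  assumes "continuous_on {x..x+d} G"
  shows "(\<lambda>t. exp (- s * t) * (G (x + t) - G x)) integrable_on {0..d}"
  by (intro integrable_continuous_real continuous_intros continuous_on_translate_Icc assms)

lemma lap_right_add:
  assumes "continuous_on {x..x+d} G" "continuous_on {x..x+d} H"
  shows "lap_right (\<lambda>y. G y + H y) x d s = lap_right G x d s + lap_right H x d s"
proof -
  have "integral {0..d} (\<lambda>t. exp (- s * t) * (G (x + t) + H (x + t) - (G x + H x)))
      = integral {0..d} (\<lambda>t. exp (- s * t) * (G (x + t) - G x) + exp (- s * t) * (H (x + t) - H x))"
    by (simp add: algebra_simps)
  also have "\<dots> = integral {0..d} (\<lambda>t. exp (- s * t) * (G (x + t) - G x))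
      + integral {0..d} (\<lambda>t. exp (- s * t) * (H (x + t) - H x))"
    by (intro integral_add lap_right_integrable assms)
  finally show ?thesis
    unfolding lap_right_def by (simp add: algebra_simps)
qed

lemma lap_right_cmult: "lap_right (\<lambda>y. c * G y) x d s = c * lap_right G x d s"
proof -
  have "(\<lambda>t. exp (- s * t) * (c * G (x + t) - c * G x))
      = (\<lambda>t. c *\<^sub>R (exp (- s * t) * (G (x + t) - G x)))"
    by (auto simp: fun_eq_iff algebra_simps)
  then show ?thesis
    unfolding lap_right_def by (simp only: integral_cmul) simp
qed

lemma lap_right_uminus: "lap_right (\<lambda>y. - G y) x d s = - lap_right G x d s"
  using lap_right_cmult[of "-1" G] by simp

lemma lap_right_diff:
  assumes "continuous_on {x..x+d} G" "continuous_on {x..x+d} H"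
  shows "lap_right (\<lambda>y. G y - H y) x d s = lap_right G x d s - lap_right H x d s"
  using lap_right_add[of x d G "\<lambda>y. - H y" s] assms
  by (simp add: lap_right_uminus continuous_on_minus)

lemma lap_right_const [simp]: "lap_right (\<lambda>y. c) x d s = 0"
  unfolding lap_right_def by simp

lemma lap_right_mono:
  assumes "continuous_on {x..x+d} G" "continuous_on {x..x+d} H"
    and "\<And>t. t \<in> {0..d} \<Longrightarrow> G (x + t) - G x \<le> H (x + t) - H x"
  shows "lap_right G x d s \<le> lap_right H x d s"
  unfolding lap_right_def
  by (intro mult_left_mono integral_le lap_right_integrable assms) auto

lemma lap_right_cong:
  assumes "\<And>y. y \<in> {x..x+d} \<Longrightarrow> G y = H y"
  shows "lap_right G x d s = lap_right H x d s"
  unfolding lap_right_def using assms by (intro arg_cong2[where f="(*)"] integral_cong) auto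

lemma lap_left_cong:
  assumes "\<And>y. y \<in> {x-d..x} \<Longrightarrow> G y = H y"
  shows "lap_left G x d s = lap_left H x d s"
  unfolding lap_left_def using assms by (intro arg_cong2[where f="(*)"] integral_cong) auto

lemma lap_left_eq_lap_right_reflect:
  "lap_left G x d s = lap_right (\<lambda>y. - G (- y)) (- x) d s"
proof -
  have "(\<lambda>t. exp (- s * t) * (- G (x - t) - - G x)) = (\<lambda>t. - (exp (- s * t) * (G (x - t) - G x)))"
    by (simp add: fun_eq_iff algebra_simps)
  then show ?thesis
    unfolding lap_right_def lap_left_def by simp
qed

lemma lap_left_uminus: "lap_left (\<lambda>y. - G y) x d s = - lap_left G x d s"
  unfolding lap_left_eq_lap_right_reflect by (simp add: lap_right_uminus)

lemma tendsto_lap_right_ident: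
  assumes "0 < D"
  shows "(lap_right (\<lambda>y. y) x D \<longlongrightarrow> 1) at_top"
proof -
  have "((\<lambda>s. 1 - exp (- s * D) * (1 + s * D)) \<longlongrightarrow> 1) at_top"
    using assms by real_asymp
  moreover have "\<forall>\<^sub>F s in at_top. 1 - exp (- s * D) * (1 + s * D) = lap_right (\<lambda>y. y) x D s"
    using eventually_gt_at_top[of 0]
  proof eventually_elim
    case (elim s)
    let ?P = "\<lambda>t. - (t / s + 1 / s\<^sup>2) * exp (- s * t)"
    have "((\<lambda>t. exp (- s * t) * t) has_integral (?P D - ?P 0)) {0..D}"
    proof (rule fundamental_theorem_of_calculus)
      fix t
      have "(?P has_real_derivative exp (- s * t) * t) (at t)"
        using elim by (auto intro!: derivative_eq_intros simp: field_simps power2_eq_square)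
      then show "(?P has_vector_derivative exp (- s * t) * t) (at t within {0..D})"
        by (simp add: has_real_derivative_iff_has_vector_derivative has_vector_derivative_at_within)
    qed (use assms in auto)
    then show ?case
      unfolding lap_right_def using elim by (simp add: integral_unique field_simps power2_eq_square)
  qed
  ultimately show ?thesis
    by (rule Lim_transform_eventually)
qed

text \<open>Only the behaviour of the increments near \<open>t = 0\<close> matters: the rest of the integral is
  damped by \<open>exp (- s * d)\<close>, which beats the factor \<open>s\<^sup>2\<close>.\<close>

lemma lap_right_diff_width_tendsto_0:
  assumes cont: "continuous_on {x..x+D} G" and d: "0 < d" "d \<le> D"
  shows "((\<lambda>s. lap_right G x D s - lap_right G x d s) \<longlongrightarrow> 0) at_top"
proof -
  have "continuous_on {0..D} (\<lambda>t. G (x + t) - G x)"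
    by (intro continuous_intros continuous_on_translate_Icc cont)
  then obtain M where M: "\<And>t. t \<in> {0..D} \<Longrightarrow> norm (G (x + t) - G x) \<le> M"
    using continuous_on_compact_bound[OF compact_Icc] by blast
  have "\<forall>\<^sub>F s in at_top.
      norm (lap_right G x D s - lap_right G x d s) \<le> s\<^sup>2 * exp (- s * d) * (M * (D - d))"
    using eventually_ge_at_top[of 0]
  proof eventually_elim
    case (elim s)
    define g where "g t = exp (- s * t) * (G (x + t) - G x)" for t
    have "integral {0..d} g + integral {d..D} g = integral {0..D} g"
      using d lap_right_integrable[OF cont] unfolding g_def
      by (intro Henstock_Kurzweil_Integration.integral_combine) auto
    then have "integral {0..D} g - integral {0..d} g = integral {d..D} g"
      by simp
    then have diff: "lap_right G x D s - lap_right G x d s = s\<^sup>2 * integral {d..D} g"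
      unfolding lap_right_def g_def[symmetric] by (metis right_diff_distrib)
    have "norm (integral {d..D} g) \<le> exp (- s * d) * M * (D - d)"
    proof (rule integral_bound)
      have "continuous_on {0..D} g"
        unfolding g_def by (intro continuous_intros continuous_on_translate_Icc cont)
      then show "continuous_on {d..D} g"
        by (rule continuous_on_subset) (use d in auto)
      fix t assume t: "t \<in> {d..D}"
      have "norm (g t) = exp (- s * t) * norm (G (x + t) - G x)"
        by (simp add: g_def abs_mult)
      also have "\<dots> \<le> exp (- s * d) * M"
        using t d elim M[of t] by (intro mult_mono) (auto intro: mult_left_mono)
      finally show "norm (g t) \<le> exp (- s * d) * M" .
    qed (use d in auto)
    then have "norm (s\<^sup>2 * integral {d..D} g) \<le> s\<^sup>2 * (exp (- s * d) * M * (D - d))"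
      by (simp add: abs_mult mult_left_mono)
    then show ?case
      unfolding diff by (simp only: mult.assoc)
  qed
  moreover have "((\<lambda>s. s\<^sup>2 * exp (- s * d) * (M * (D - d))) \<longlongrightarrow> 0) at_top"
  proof (rule tendsto_mult_left_zero)
    show "((\<lambda>s::real. s\<^sup>2 * exp (- s * d)) \<longlongrightarrow> 0) at_top"
      using d by real_asymp
  qed
  ultimately show ?thesis
    by (rule Lim_null_comparison)
qed

lemma lap_right_tendsto_width_iff:
  assumes "continuous_on {x..x+D} G" "0 < d" "d \<le> D"
  shows "(lap_right G x d \<longlongrightarrow> L) at_top \<longleftrightarrow> (lap_right G x D \<longlongrightarrow> L) at_top"
  using Lim_transform[OF _ lap_right_diff_width_tendsto_0[OF assms]]
    Lim_transform2[OF _ lap_right_diff_width_tendsto_0[OF assms]] by blast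

section \<open>Minor functions lie below major functions\<close>

lemma le_if_lap_right_pos:
  fixes G :: "real \<Rightarrow> real"
  assumes "a < b" and cont: "continuous_on {a..b} G"
    and pos: "\<And>x. x \<in> {a..<b} \<Longrightarrow> \<exists>s. 0 < lap_right G x (b - x) s"
  shows "G a \<le> G b"
proof -
  obtain m where m: "m \<in> {a..b}" "\<And>y. y \<in> {a..b} \<Longrightarrow> G y \<le> G m"
    using continuous_attains_sup[OF compact_Icc _ cont] \<open>a < b\<close> by auto
  have "m = b"
  proof (rule ccontr)
    assume "m \<noteq> b"
    with m have "m \<in> {a..<b}"
      by auto
    then obtain s where "0 < lap_right G m (b - m) s"
      using pos by blast
    moreover have "lap_right G m (b - m) s \<le> lap_right (\<lambda>y. G m) m (b - m) s"
      using m by (intro lap_right_mono continuous_on_subset[OF cont]) auto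
    ultimately show False
      by simp
  qed
  with m show ?thesis
    by auto
qed

lemma laplace_major_Liminf_lap_right:
  assumes "laplace_major f a b U" "x \<in> {a..<b}"
  shows "ereal (f x) \<le> Liminf at_top (\<lambda>s. ereal (lap_right U x (b - x) s))"
  using assms unfolding laplace_major_def lower_LD_def
  by (auto dest!: bspec[of _ _ x] intro: order.trans min.cobounded1)

lemma laplace_minor_Limsup_lap_right:
  assumes "laplace_minor f a b V" "x \<in> {a..<b}"
  shows "Limsup at_top (\<lambda>s. ereal (lap_right V x (b - x) s)) \<le> ereal (f x)"
  using assms unfolding laplace_minor_def upper_LD_def
  by (auto dest!: bspec[of _ _ x] intro: order.trans[rotated] max.cobounded1)

text \<open>Eventually the transforms of \<open>U\<close> and \<open>V\<close> are within \<open>\<eta>/4\<close> of \<open>f x\<close> and that of the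
  identity exceeds \<open>1/2\<close>.\<close>

lemma eventually_lap_right_major_minus_minor_pos:
  assumes U: "laplace_major f a b U" and V: "laplace_minor f a b V" and x: "x \<in> {a..<b}"
    and "0 < \<eta>"
  shows "\<forall>\<^sub>F s in at_top. 0 < lap_right (\<lambda>y. U y - V y + \<eta> * y) x (b - x) s"
proof -
  have sub: "{x..x + (b - x)} \<subseteq> {a..b}"
    using x by auto
  have cU: "continuous_on {x..x + (b - x)} U" and cV: "continuous_on {x..x + (b - x)} V"
    using U V continuous_on_subset[OF _ sub] unfolding laplace_major_def laplace_minor_def by blast+
  have lap_eq: "lap_right (\<lambda>y. U y - V y + \<eta> * y) x (b - x) s
      = lap_right U x (b - x) s - lap_right V x (b - x) s + \<eta> * lap_right (\<lambda>y. y) x (b - x) s" for s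
  proof -
    have "lap_right (\<lambda>y. U y - V y + \<eta> * y) x (b - x) s
        = lap_right (\<lambda>y. U y - V y) x (b - x) s + lap_right (\<lambda>y. \<eta> * y) x (b - x) s"
      by (intro lap_right_add continuous_intros cU cV)
    then show ?thesis
      by (simp add: lap_right_diff[OF cU cV] lap_right_cmult)
  qed
  have "\<forall>\<^sub>F s in at_top. f x - \<eta>/4 < lap_right U x (b - x) s"
    using laplace_major_Liminf_lap_right[OF U x, unfolded le_Liminf_iff, rule_format,
        of "ereal (f x - \<eta>/4)"] \<open>0 < \<eta>\<close> by simp
  moreover have "\<forall>\<^sub>F s in at_top. lap_right V x (b - x) s < f x + \<eta>/4"
    using laplace_minor_Limsup_lap_right[OF V x, unfolded Limsup_le_iff, rule_format,
        of "ereal (f x + \<eta>/4)"] \<open>0 < \<eta>\<close> by simp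
  moreover have "\<forall>\<^sub>F s in at_top. 1/2 < lap_right (\<lambda>y. y) x (b - x) s"
    using x by (intro order_tendstoD(1)[OF tendsto_lap_right_ident]) auto
  ultimately show ?thesis
  proof eventually_elim
    case (elim s)
    then have "\<eta> * (1/2) < \<eta> * lap_right (\<lambda>y. y) x (b - x) s"
      using \<open>0 < \<eta>\<close> by simp
    with elim show ?case
      unfolding lap_eq by simp
  qed
qed

lemma laplace_minor_le_major:
  assumes "a < b" and U: "laplace_major f a b U" and V: "laplace_minor f a b V"
  shows "V b - V a \<le> U b - U a"
proof (rule field_le_epsilon)
  fix e :: real assume "0 < e"
  define \<eta> where "\<eta> = e / (b - a)"
  have "0 < \<eta>"
    using \<open>0 < e\<close> \<open>a < b\<close> by (simp add: \<eta>_def)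
  have "U a - V a + \<eta> * a \<le> U b - V b + \<eta> * b"
  proof (rule le_if_lap_right_pos[where G = "\<lambda>y. U y - V y + \<eta> * y", OF \<open>a < b\<close>])
    show "continuous_on {a..b} (\<lambda>y. U y - V y + \<eta> * y)"
      using U V unfolding laplace_major_def laplace_minor_def by (intro continuous_intros) auto
    show "\<exists>s. 0 < lap_right (\<lambda>y. U y - V y + \<eta> * y) x (b - x) s" if "x \<in> {a..<b}" for x
      using eventually_lap_right_major_minus_minor_pos[OF U V that \<open>0 < \<eta>\<close>]
      by (auto simp: eventually_at_top_linorder)
  qed
  moreover have "\<eta> * b - \<eta> * a = \<eta> * (b - a)"
    by (simp only: right_diff_distrib)
  moreover have "\<eta> * (b - a) = e"
    using \<open>a < b\<close> by (simp add: \<eta>_def)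
  ultimately show "V b - V a \<le> U b - U a + e"
    by linarith
qed

section \<open>Monotone functions dominating at countably many points\<close>

definition sym_max :: "(real \<Rightarrow> real) \<Rightarrow> real \<Rightarrow> real" where
  "sym_max g r = Sup (g ` {-r..r})"

lemma bdd_above_image_Icc:
  fixes g :: "real \<Rightarrow> real"
  assumes "continuous_on UNIV g"
  shows "bdd_above (g ` {a..b})"
  by (intro bounded_imp_bdd_above compact_imp_bounded compact_continuous_image
      continuous_on_subset[OF assms] compact_Icc) auto

lemma sym_max_ge:
  assumes "continuous_on UNIV g" "\<bar>u\<bar> \<le> r"
  shows "g u \<le> sym_max g r"
  unfolding sym_max_def
  using assms by (intro cSup_upper imageI bdd_above_image_Icc) (auto simp: abs_le_iff)

lemma sym_max_le:
  assumes "0 \<le> r" "\<And>u. \<bar>u\<bar> \<le> r \<Longrightarrow> g u \<le> M"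
  shows "sym_max g r \<le> M"
  unfolding sym_max_def using assms by (intro cSup_least) auto

lemma sym_max_mono:
  assumes "continuous_on UNIV g" "0 \<le> r" "r \<le> r'"
  shows "sym_max g r \<le> sym_max g r'"
  using assms by (intro sym_max_le sym_max_ge) auto

lemma sym_max_0 [simp]: "sym_max g 0 = g 0"
  unfolding sym_max_def by simp

lemma sym_max_le_add:
  assumes g: "continuous_on UNIV g" and "0 \<le> r" "r \<le> r'"
    and close: "\<And>u v. \<bar>u\<bar> \<le> r' \<Longrightarrow> \<bar>v\<bar> \<le> r \<Longrightarrow> \<bar>u - v\<bar> \<le> r' - r \<Longrightarrow> g u \<le> g v + e"
  shows "sym_max g r' \<le> sym_max g r + e"
proof (rule sym_max_le)
  fix u assume u: "\<bar>u\<bar> \<le> r'"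
  define v where "v = max (- r) (min r u)"
  have v: "\<bar>v\<bar> \<le> r" "\<bar>u - v\<bar> \<le> r' - r"
    using u assms(2,3) by (auto simp: v_def abs_le_iff max_def min_def)
  have "g u \<le> g v + e"
    using close[OF u v] .
  also have "g v \<le> sym_max g r"
    using sym_max_ge[OF g v(1)] .
  finally show "g u \<le> sym_max g r + e"
    by simp
qed (use assms in auto)

lemma abs_sym_max_diff_le:
  assumes g: "continuous_on UNIV g" and "0 \<le> r" "0 \<le> r'"
    and close: "\<And>u v. \<bar>u\<bar> \<le> max r r' \<Longrightarrow> \<bar>v\<bar> \<le> max r r' \<Longrightarrow> \<bar>u - v\<bar> \<le> \<bar>r - r'\<bar> \<Longrightarrow> g u \<le> g v + e"
  shows "\<bar>sym_max g r - sym_max g r'\<bar> \<le> e"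
proof (cases "r \<le> r'")
  case True
  have "sym_max g r' \<le> sym_max g r + e"
    by (intro sym_max_le_add[OF g \<open>0 \<le> r\<close> True] close) (use True in \<open>auto simp: max_def\<close>)
  moreover have "sym_max g r \<le> sym_max g r'"
    by (intro sym_max_mono[OF g \<open>0 \<le> r\<close> True])
  ultimately show ?thesis
    by (simp add: abs_le_iff)
next
  case False
  have "sym_max g r \<le> sym_max g r' + e"
    by (intro sym_max_le_add[OF g \<open>0 \<le> r'\<close>] close) (use False in \<open>auto simp: max_def\<close>)
  moreover have "sym_max g r' \<le> sym_max g r"
    using False by (intro sym_max_mono[OF g \<open>0 \<le> r'\<close>]) auto
  ultimately show ?thesis
    by (simp add: abs_le_iff)
qed

lemma continuous_on_sym_max:
  assumes g: "continuous_on UNIV g"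
  shows "continuous_on {0..} (sym_max g)"
  unfolding continuous_on_iff
proof (intro ballI allI impI)
  fix r0 e :: real assume r0: "r0 \<in> {0..}" and "0 < e"
  define T where "T = r0 + 1"
  have "uniformly_continuous_on {-T..T} g"
    by (intro compact_uniformly_continuous continuous_on_subset[OF g]) auto
  then obtain \<delta> where "0 < \<delta>" and \<delta>: "\<And>u v. u \<in> {-T..T} \<Longrightarrow> v \<in> {-T..T} \<Longrightarrow>
      dist v u < \<delta> \<Longrightarrow> dist (g v) (g u) < e/2"
    unfolding uniformly_continuous_on_def using \<open>0 < e\<close> by (meson half_gt_zero)
  show "\<exists>d>0. \<forall>r\<in>{0..}. dist r r0 < d \<longrightarrow> dist (sym_max g r) (sym_max g r0) < e"
  proof (intro exI[of _ "min \<delta> 1"] conjI ballI impI)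
    fix r assume r: "r \<in> {0..}" "dist r r0 < min \<delta> 1"
    have "\<bar>sym_max g r - sym_max g r0\<bar> \<le> e/2"
    proof (rule abs_sym_max_diff_le[OF g])
      fix u v assume "\<bar>u\<bar> \<le> max r r0" "\<bar>v\<bar> \<le> max r r0" "\<bar>u - v\<bar> \<le> \<bar>r - r0\<bar>"
      then have "dist (g u) (g v) < e/2"
        using r by (intro \<delta>) (auto simp: dist_real_def T_def)
      then show "g u \<le> g v + e/2"
        unfolding dist_real_def abs_less_iff by auto
    qed (use r r0 in auto)
    then show "dist (sym_max g r) (sym_max g r0) < e"
      using \<open>0 < e\<close> by (simp add: dist_real_def)
  qed (use \<open>0 < \<delta>\<close> in auto)
qed

lemma small_majorant_exists:
  fixes g :: "real \<Rightarrow> real"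
  assumes g: "continuous_on UNIV g" and "g 0 = 0" and "0 < w"
  obtains \<psi> \<tau> where "continuous_on {0..} \<psi>" "mono_on {0..} \<psi>" "\<psi> 0 = 0"
    "\<And>t. 0 \<le> t \<Longrightarrow> 0 \<le> \<psi> t \<and> \<psi> t \<le> w" "0 < \<tau>"
    "\<And>t. t \<in> {0..\<tau>} \<Longrightarrow> g t + sqrt t \<le> \<psi> t \<and> g (- t) + sqrt t \<le> \<psi> t"
proof -
  define h where "h t = sym_max g t + sqrt t" for t
  have h: "continuous_on {0..} h"
    unfolding h_def by (intro continuous_intros continuous_on_sym_max g)
  have "h 0 = 0"
    by (simp add: h_def \<open>g 0 = 0\<close>)
  obtain \<tau> where "0 < \<tau>" and \<tau>: "\<forall>t\<in>{0..}. dist t 0 < \<tau> \<longrightarrow> dist (h t) (h 0) < w"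
    using h \<open>0 < w\<close> unfolding continuous_on_iff by (meson atLeast_iff order_refl)
  show ?thesis
  proof (rule that[of "\<lambda>t. min w (h t)" "\<tau>/2"])
    show "continuous_on {0..} (\<lambda>t. min w (h t))"
      by (intro continuous_intros h)
    show "mono_on {0..} (\<lambda>t. min w (h t))"
      unfolding h_def using sym_max_mono[OF g] by (intro mono_onI min.mono add_mono) auto
    show "min w (h 0) = 0" "0 < \<tau>/2"
      using \<open>0 < w\<close> \<open>0 < \<tau>\<close> \<open>h 0 = 0\<close> by simp_all
    show "0 \<le> min w (h t) \<and> min w (h t) \<le> w" if "0 \<le> t" for t
      using sym_max_ge[OF g, of 0 t] that \<open>0 < w\<close> \<open>g 0 = 0\<close> by (simp add: h_def)
    fix t assume t: "t \<in> {0..\<tau>/2}"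
    then have "dist (h t) (h 0) < w"
      using \<open>0 < \<tau>\<close> by (intro \<tau>[rule_format]) (auto simp: dist_real_def)
    then have "min w (h t) = h t"
      using \<open>h 0 = 0\<close> by (simp add: dist_real_def)
    then show "g t + sqrt t \<le> min w (h t) \<and> g (- t) + sqrt t \<le> min w (h t)"
      using t sym_max_ge[OF g, of t t] sym_max_ge[OF g, of "- t" t] by (simp add: h_def)
  qed
qed

text \<open>The summand \<open>sqrt t\<close> forces the right Laplace transforms of \<open>F + \<Phi>\<close> at \<open>c\<close> to \<open>+\<infinity>\<close>.\<close>

definition dominates_at :: "(real \<Rightarrow> real) \<Rightarrow> (real \<Rightarrow> real) \<Rightarrow> real \<Rightarrow> bool" where
  "dominates_at F \<Phi> c \<longleftrightarrow> (\<exists>\<tau>>0. \<forall>t\<in>{0..\<tau>}.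
     \<bar>F (c + t) - F c\<bar> + sqrt t \<le> \<Phi> (c + t) - \<Phi> c \<and>
     \<bar>F (c - t) - F c\<bar> + sqrt t \<le> \<Phi> c - \<Phi> (c - t))"

lemma dominates_at_mono:
  assumes "dominates_at F \<phi> c" and mono: "\<And>x y. x \<le> y \<Longrightarrow> \<phi> y - \<phi> x \<le> \<Phi> y - \<Phi> x"
  shows "dominates_at F \<Phi> c"
proof -
  obtain \<tau> where "0 < \<tau>" and \<tau>: "\<forall>t\<in>{0..\<tau>}. \<bar>F (c + t) - F c\<bar> + sqrt t \<le> \<phi> (c + t) - \<phi> c \<and>
      \<bar>F (c - t) - F c\<bar> + sqrt t \<le> \<phi> c - \<phi> (c - t)"
    using assms(1) unfolding dominates_at_def by blast
  show ?thesis
    unfolding dominates_at_def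
  proof (intro exI[of _ \<tau>] conjI ballI)
    fix t assume t: "t \<in> {0..\<tau>}"
    then have "\<phi> (c + t) - \<phi> c \<le> \<Phi> (c + t) - \<Phi> c" "\<phi> c - \<phi> (c - t) \<le> \<Phi> c - \<Phi> (c - t)"
      by (auto intro: mono)
    moreover from \<tau> t have "\<bar>F (c + t) - F c\<bar> + sqrt t \<le> \<phi> (c + t) - \<phi> c"
      "\<bar>F (c - t) - F c\<bar> + sqrt t \<le> \<phi> c - \<phi> (c - t)"
      by blast+
    ultimately show "\<bar>F (c + t) - F c\<bar> + sqrt t \<le> \<Phi> (c + t) - \<Phi> c"
      "\<bar>F (c - t) - F c\<bar> + sqrt t \<le> \<Phi> c - \<Phi> (c - t)"
      by linarith+
  qed (fact \<open>0 < \<tau>\<close>)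
qed

lemma dominates_at_uminus: "dominates_at (\<lambda>y. - F y) \<Phi> c \<longleftrightarrow> dominates_at F \<Phi> c"
  unfolding dominates_at_def by (simp add: abs_minus_commute)

lemma dominates_at_reflect:
  "dominates_at F \<Phi> c \<Longrightarrow> dominates_at (\<lambda>y. - F (- y)) (\<lambda>y. - \<Phi> (- y)) (- c)"
  unfolding dominates_at_def by (auto simp: abs_minus_commute algebra_simps)

lemma dominating_bump_exists:
  assumes cont: "continuous_on UNIV F" and "0 < w"
  obtains \<phi> where "continuous_on UNIV \<phi>" "mono \<phi>" "\<And>x. \<bar>\<phi> x\<bar> \<le> w" "dominates_at F \<phi> c"
proof -
  define g where "g u = \<bar>F (c + u) - F c\<bar>" for u
  have "continuous_on UNIV g"
    unfolding g_def by (intro continuous_intros continuous_on_compose2[OF cont]) auto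
  moreover have "g 0 = 0"
    by (simp add: g_def)
  ultimately obtain \<psi> \<tau> where \<psi>_cont: "continuous_on {0..} \<psi>" and \<psi>_mono: "mono_on {0..} \<psi>"
    and "\<psi> 0 = 0" and \<psi>_bounds: "\<And>t. 0 \<le> t \<Longrightarrow> 0 \<le> \<psi> t \<and> \<psi> t \<le> w" and "0 < \<tau>"
    and \<psi>_ge: "\<And>t. t \<in> {0..\<tau>} \<Longrightarrow> g t + sqrt t \<le> \<psi> t \<and> g (- t) + sqrt t \<le> \<psi> t"
    using small_majorant_exists[of g w] \<open>0 < w\<close> by blast
  define \<phi> where "\<phi> x = \<psi> (max (x - c) 0) - \<psi> (max (c - x) 0)" for x
  show ?thesis
  proof
    show "continuous_on UNIV \<phi>"
      unfolding \<phi>_def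
      by (intro continuous_on_diff continuous_on_compose2[OF \<psi>_cont] continuous_intros) auto
    show "mono \<phi>"
      unfolding \<phi>_def by (intro monoI diff_mono mono_onD[OF \<psi>_mono]) auto
    show "\<bar>\<phi> x\<bar> \<le> w" for x
      using \<psi>_bounds[of "max (x - c) 0"] \<psi>_bounds[of "max (c - x) 0"] unfolding \<phi>_def by auto
    show "dominates_at F \<phi> c"
      unfolding dominates_at_def
    proof (intro exI[of _ \<tau>] conjI ballI)
      fix t assume t: "t \<in> {0..\<tau>}"
      then have "\<phi> (c + t) - \<phi> c = \<psi> t" "\<phi> c - \<phi> (c - t) = \<psi> t"
        using \<open>\<psi> 0 = 0\<close> by (simp_all add: \<phi>_def)
      with \<psi>_ge[OF t] show "\<bar>F (c + t) - F c\<bar> + sqrt t \<le> \<phi> (c + t) - \<phi> c"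
        "\<bar>F (c - t) - F c\<bar> + sqrt t \<le> \<phi> c - \<phi> (c - t)"
        by (simp_all add: g_def)
    qed (fact \<open>0 < \<tau>\<close>)
  qed
qed

lemma suminf_mono_bumps:
  fixes \<phi> :: "nat \<Rightarrow> real \<Rightarrow> real"
  assumes cont: "\<And>n. continuous_on UNIV (\<phi> n)" and mono: "\<And>n. mono (\<phi> n)"
    and bound: "\<And>n x. \<bar>\<phi> n x\<bar> \<le> w n" and "summable w"
  shows "continuous_on UNIV (\<lambda>x. \<Sum>n. \<phi> n x)"
    and "\<And>n x y. x \<le> y \<Longrightarrow> \<phi> n y - \<phi> n x \<le> (\<Sum>n. \<phi> n y) - (\<Sum>n. \<phi> n x)"
    and "\<And>x y. (\<Sum>n. \<phi> n y) - (\<Sum>n. \<phi> n x) \<le> 2 * (\<Sum>n. w n)"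
proof -
  have summable_\<phi>: "summable (\<lambda>n. \<phi> n x)" for x
    using bound by (intro summable_comparison_test'[OF \<open>summable w\<close>]) auto
  have diff: "(\<Sum>n. \<phi> n y) - (\<Sum>n. \<phi> n x) = (\<Sum>n. \<phi> n y - \<phi> n x)" for x y
    by (intro suminf_diff summable_\<phi>)
  have summable_diff_\<phi>: "summable (\<lambda>n. \<phi> n y - \<phi> n x)" for x y
    by (intro summable_diff summable_\<phi>)
  have "uniform_limit UNIV (\<lambda>n x. \<Sum>i<n. \<phi> i x) (\<lambda>x. \<Sum>n. \<phi> n x) sequentially"
    using bound by (intro Weierstrass_m_test[OF _ \<open>summable w\<close>]) auto
  then show "continuous_on UNIV (\<lambda>x. \<Sum>n. \<phi> n x)"
    by (rule uniform_limit_theorem[OF always_eventually, rotated])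
      (auto intro!: continuous_on_sum cont)
  show "\<phi> n y - \<phi> n x \<le> (\<Sum>n. \<phi> n y) - (\<Sum>n. \<phi> n x)" if "x \<le> y" for n x y
    using sum_le_suminf[OF summable_diff_\<phi>, of "{n}" y x] mono that by (simp add: diff monoD)
  show "(\<Sum>n. \<phi> n y) - (\<Sum>n. \<phi> n x) \<le> 2 * (\<Sum>n. w n)" for x y
  proof -
    have "(\<Sum>n. \<phi> n y - \<phi> n x) \<le> (\<Sum>n. 2 * w n)"
    proof (rule suminf_le[OF _ summable_diff_\<phi> summable_mult[OF \<open>summable w\<close>]])
      show "\<phi> n y - \<phi> n x \<le> 2 * w n" for n
        using abs_le_D1[OF bound[of n y]] abs_le_D2[OF bound[of n x]] by linarith
    qed
    then show ?thesis
      using suminf_mult[OF \<open>summable w\<close>, of 2] by (simp add: diff)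
  qed
qed

lemma dominating_mono_exists:
  fixes F :: "real \<Rightarrow> real"
  assumes cont: "continuous_on UNIV F" and "countable S" and "0 < \<epsilon>"
  obtains \<Phi> where "continuous_on UNIV \<Phi>" "mono \<Phi>" "\<And>x y. \<Phi> y - \<Phi> x \<le> \<epsilon>"
    "\<And>c. c \<in> S \<Longrightarrow> dominates_at F \<Phi> c"
proof -
  obtain idx :: "real \<Rightarrow> nat" where "inj_on idx S"
    using countableE[OF \<open>countable S\<close>] by blast
  define c where "c = inv_into S idx"
  have S_enum: "c (idx c0) = c0" if "c0 \<in> S" for c0
    using \<open>inj_on idx S\<close> that by (simp add: c_def)
  define w :: "nat \<Rightarrow> real" where "w = (\<lambda>n. \<epsilon> / 4 * (1/2) ^ n)"
  have w_pos: "0 < w n" for n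
    using \<open>0 < \<epsilon>\<close> by (simp add: w_def)
  have w_sums: "w sums (\<epsilon> / 2)"
    unfolding w_def using sums_mult[OF geometric_sums[of "1/2 :: real"], of "\<epsilon> / 4"] by simp
  have "\<exists>\<phi>. continuous_on UNIV \<phi> \<and> mono \<phi> \<and> (\<forall>x. \<bar>\<phi> x\<bar> \<le> w n) \<and> dominates_at F \<phi> (c n)" for n
    using dominating_bump_exists[OF cont w_pos] by blast
  then obtain \<phi> where \<phi>: "\<And>n. continuous_on UNIV (\<phi> n) \<and> mono (\<phi> n) \<and> (\<forall>x. \<bar>\<phi> n x\<bar> \<le> w n)
      \<and> dominates_at F (\<phi> n) (c n)"
    by metis
  note bumps = suminf_mono_bumps[of \<phi> w, OF _ _ _ sums_summable[OF w_sums]]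
  have term_le: "\<phi> n y - \<phi> n x \<le> (\<Sum>n. \<phi> n y) - (\<Sum>n. \<phi> n x)" if "x \<le> y" for n x y
    using \<phi> that by (intro bumps) auto
  show ?thesis
  proof (rule that[of "\<lambda>x. \<Sum>n. \<phi> n x"])
    show "continuous_on UNIV (\<lambda>x. \<Sum>n. \<phi> n x)"
      using \<phi> by (intro bumps) auto
    show "mono (\<lambda>x. \<Sum>n. \<phi> n x)"
    proof
      fix x y :: real assume "x \<le> y"
      with \<phi>[of 0] have "0 \<le> \<phi> 0 y - \<phi> 0 x"
        by (simp add: monoD)
      with term_le[OF \<open>x \<le> y\<close>, of 0] show "(\<Sum>n. \<phi> n x) \<le> (\<Sum>n. \<phi> n y)"
        by linarith
    qed
    show "(\<Sum>n. \<phi> n y) - (\<Sum>n. \<phi> n x) \<le> \<epsilon>" for x y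
    proof -
      have "(\<Sum>n. \<phi> n y) - (\<Sum>n. \<phi> n x) \<le> 2 * (\<Sum>n. w n)"
        by (rule bumps(3)) (use \<phi> in auto)
      moreover have "(\<Sum>n. w n) = \<epsilon> / 2"
        using sums_unique[OF w_sums] by simp
      ultimately show ?thesis
        by linarith
    qed
    show "dominates_at F (\<lambda>x. \<Sum>n. \<phi> n x) c0" if "c0 \<in> S" for c0
    proof (rule dominates_at_mono)
      show "dominates_at F (\<phi> (idx c0)) c0"
        using \<phi>[of "idx c0"] S_enum[OF that] by simp
      show "\<phi> (idx c0) y - \<phi> (idx c0) x \<le> (\<Sum>n. \<phi> n y) - (\<Sum>n. \<phi> n x)" if "x \<le> y" for x y
        using term_le[OF that] .
    qed
  qed
qed

section \<open>Major and minor functions of a Laplace derivative\<close>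

lemma mult_le_sqrt:
  fixes K t :: real
  assumes "0 \<le> t" "0 < K" "t \<le> 1 / K\<^sup>2"
  shows "K * t \<le> sqrt t"
proof -
  have "sqrt t \<le> sqrt (1 / K\<^sup>2)"
    using assms(3) by (rule real_sqrt_le_mono)
  also have "\<dots> = 1 / K"
    using \<open>0 < K\<close> by (simp add: real_sqrt_divide)
  finally have "K * sqrt t \<le> 1"
    using \<open>0 < K\<close> by (simp add: pos_le_divide_eq mult.commute)
  then have "K * sqrt t * sqrt t \<le> sqrt t"
    using \<open>0 \<le> t\<close> mult_right_mono[of "K * sqrt t" 1 "sqrt t"] by simp
  moreover have "K * t = K * sqrt t * sqrt t"
    using \<open>0 \<le> t\<close> by (simp add: mult.assoc)
  ultimately show ?thesis
    by linarith
qed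

lemma filterlim_lap_right_at_top_if_sqrt_growth:
  fixes H :: "real \<Rightarrow> real"
  assumes cont: "continuous_on {x..x+D} H" and "0 < D" "0 < \<tau>"
    and growth: "\<And>t. t \<in> {0..\<tau>} \<Longrightarrow> sqrt t \<le> H (x + t) - H x"
  shows "filterlim (lap_right H x D) at_top at_top"
  unfolding filterlim_at_top
proof
  fix Z :: real
  define K where "K = 2 * \<bar>Z\<bar> + 2"
  define \<tau>' where "\<tau>' = min (min \<tau> D) (1 / K\<^sup>2)"
  have "0 < K"
    by (simp add: K_def)
  have \<tau>': "0 < \<tau>'" "\<tau>' \<le> D" "\<tau>' \<le> \<tau>" "\<tau>' \<le> 1 / K\<^sup>2"
    using \<open>0 < \<tau>\<close> \<open>0 < D\<close> \<open>0 < K\<close> by (auto simp: \<tau>'_def)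
  have linear_le: "K * lap_right (\<lambda>y. y) x \<tau>' s \<le> lap_right H x \<tau>' s" for s
  proof -
    have "lap_right (\<lambda>y. K * y) x \<tau>' s \<le> lap_right H x \<tau>' s"
    proof (rule lap_right_mono)
      show "continuous_on {x..x+\<tau>'} H"
        using \<tau>' by (intro continuous_on_subset[OF cont]) auto
      fix t assume t: "t \<in> {0..\<tau>'}"
      have "K * t \<le> sqrt t"
        using t \<tau>' \<open>0 < K\<close> by (intro mult_le_sqrt) auto
      also have "\<dots> \<le> H (x + t) - H x"
        using t \<tau>' by (intro growth) auto
      finally show "K * (x + t) - K * x \<le> H (x + t) - H x"
        by (simp add: algebra_simps)
    qed (intro continuous_intros)
    then show ?thesis
      by (simp add: lap_right_cmult)
  qed
  have "\<forall>\<^sub>F s in at_top. 1/2 < lap_right (\<lambda>y. y) x \<tau>' s"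
    using \<tau>' by (intro order_tendstoD(1)[OF tendsto_lap_right_ident]) auto
  moreover have "\<forall>\<^sub>F s in at_top. -1/2 < lap_right H x D s - lap_right H x \<tau>' s"
    using \<tau>' by (intro order_tendstoD(1)[OF lap_right_diff_width_tendsto_0[OF cont]]) auto
  ultimately show "\<forall>\<^sub>F s in at_top. Z \<le> lap_right H x D s"
  proof eventually_elim
    case (elim s)
    then have "K * (1/2) \<le> K * lap_right (\<lambda>y. y) x \<tau>' s"
      using \<open>0 < K\<close> by simp
    moreover have "K * (1/2) = \<bar>Z\<bar> + 1"
      by (simp add: K_def)
    ultimately show ?case
      using linear_le[of s] elim abs_ge_self[of Z] by linarith
  qed
qed

lemma Liminf_lap_right_add_mono_ge:
  fixes F \<Phi> :: "real \<Rightarrow> real"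
  assumes cF: "continuous_on {x..x+D} F" and c\<Phi>: "continuous_on {x..x+D} \<Phi>"
    and mono: "mono_on {x..x+D} \<Phi>" and "0 < d" "d \<le> D" and lim: "(lap_right F x d \<longlongrightarrow> L) at_top"
  shows "ereal L \<le> Liminf at_top (\<lambda>s. ereal (lap_right (\<lambda>y. F y + \<Phi> y) x D s))"
proof -
  have "(lap_right F x D \<longlongrightarrow> L) at_top"
    using lim lap_right_tendsto_width_iff[OF cF \<open>0 < d\<close> \<open>d \<le> D\<close>] by simp
  then have "Liminf at_top (\<lambda>s. ereal (lap_right F x D s)) = ereal L"
    by (intro lim_imp_Liminf) (auto intro: tendsto_ereal)
  moreover have "lap_right F x D s \<le> lap_right (\<lambda>y. F y + \<Phi> y) x D s" for s
    using mono by (intro lap_right_mono cF continuous_on_add c\<Phi>) (auto simp: mono_on_def)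
  then have "Liminf at_top (\<lambda>s. ereal (lap_right F x D s))
      \<le> Liminf at_top (\<lambda>s. ereal (lap_right (\<lambda>y. F y + \<Phi> y) x D s))"
    by (intro Liminf_mono always_eventually) simp
  ultimately show ?thesis
    by simp
qed

lemma Liminf_lap_right_add_ge:
  fixes F \<Phi> :: "real \<Rightarrow> real"
  assumes cF: "continuous_on UNIV F" and c\<Phi>: "continuous_on UNIV \<Phi>" and "mono \<Phi>" and "0 < D"
    and "dominates_at F \<Phi> x \<or> (\<exists>d. 0 < d \<and> d \<le> D \<and> (lap_right F x d \<longlongrightarrow> L) at_top)"
  shows "ereal L \<le> Liminf at_top (\<lambda>s. ereal (lap_right (\<lambda>y. F y + \<Phi> y) x D s))"
  using assms(5)
proof
  assume "dominates_at F \<Phi> x"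
  then obtain \<tau> where "0 < \<tau>" and \<tau>: "\<forall>t\<in>{0..\<tau>}. \<bar>F (x + t) - F x\<bar> + sqrt t \<le> \<Phi> (x + t) - \<Phi> x"
    unfolding dominates_at_def by blast
  have "filterlim (lap_right (\<lambda>y. F y + \<Phi> y) x D) at_top at_top"
  proof (rule filterlim_lap_right_at_top_if_sqrt_growth[OF _ \<open>0 < D\<close> \<open>0 < \<tau>\<close>])
    show "continuous_on {x..x+D} (\<lambda>y. F y + \<Phi> y)"
      by (intro continuous_on_add continuous_on_subset[OF cF] continuous_on_subset[OF c\<Phi>]) auto
    show "sqrt t \<le> F (x + t) + \<Phi> (x + t) - (F x + \<Phi> x)" if "t \<in> {0..\<tau>}" for t
      using \<tau>[rule_format, OF that] abs_ge_minus_self[of "F (x + t) - F x"] by linarith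
  qed
  then have "((\<lambda>s. ereal (lap_right (\<lambda>y. F y + \<Phi> y) x D s)) \<longlongrightarrow> \<infinity>) at_top"
    by (simp add: tendsto_PInfty_eq_at_top)
  then have "Liminf at_top (\<lambda>s. ereal (lap_right (\<lambda>y. F y + \<Phi> y) x D s)) = \<infinity>"
    by (intro lim_imp_Liminf) simp_all
  then show ?thesis
    by simp
next
  assume "\<exists>d. 0 < d \<and> d \<le> D \<and> (lap_right F x d \<longlongrightarrow> L) at_top"
  then obtain d where d: "0 < d" "d \<le> D" and lim: "(lap_right F x d \<longlongrightarrow> L) at_top"
    by blast
  show ?thesis
  proof (rule Liminf_lap_right_add_mono_ge[OF _ _ _ d lim])
    show "continuous_on {x..x+D} F" "continuous_on {x..x+D} \<Phi>"
      by (auto intro: continuous_on_subset[OF cF] continuous_on_subset[OF c\<Phi>])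
    show "mono_on {x..x+D} \<Phi>"
      by (rule mono_imp_mono_on[OF \<open>mono \<Phi>\<close>])
  qed
qed

lemma laplace_deriv_right_lim:
  assumes "laplace_deriv a b F x L" "x < b"
  shows "\<exists>d. 0 < d \<and> d \<le> b - x \<and> (lap_right F x d \<longlongrightarrow> L) at_top"
  using assms unfolding laplace_deriv_def by (auto simp: le_diff_eq add.commute)

lemma laplace_deriv_left_lim:
  assumes "laplace_deriv a b F x L" "a < x"
  shows "\<exists>d. 0 < d \<and> d \<le> x - a \<and> (lap_left F x d \<longlongrightarrow> L) at_top"
  using assms unfolding laplace_deriv_def by (auto simp: le_diff_eq add.commute)

lemma Liminf_lap_left_add_ge:
  fixes F \<Phi> :: "real \<Rightarrow> real"
  assumes cF: "continuous_on UNIV F" and c\<Phi>: "continuous_on UNIV \<Phi>" and "mono \<Phi>" and "0 < D"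
    and "dominates_at F \<Phi> x \<or> (\<exists>d. 0 < d \<and> d \<le> D \<and> (lap_left F x d \<longlongrightarrow> L) at_top)"
  shows "ereal L \<le> Liminf at_top (\<lambda>s. ereal (lap_left (\<lambda>y. F y + \<Phi> y) x D s))"
proof -
  define F' where "F' = (\<lambda>y. - F (- y))"
  define \<Phi>' where "\<Phi>' = (\<lambda>y. - \<Phi> (- y))"
  have cF': "continuous_on UNIV F'"
    unfolding F'_def by (intro continuous_intros continuous_on_compose2[OF cF]) auto
  have c\<Phi>': "continuous_on UNIV \<Phi>'"
    unfolding \<Phi>'_def by (intro continuous_intros continuous_on_compose2[OF c\<Phi>]) auto
  have "mono \<Phi>'"
    unfolding \<Phi>'_def using \<open>mono \<Phi>\<close> by (auto simp: mono_def)
  have "lap_left F x d = lap_right F' (- x) d" for d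
    by (simp add: fun_eq_iff lap_left_eq_lap_right_reflect F'_def)
  then have "dominates_at F' \<Phi>' (- x) \<or> (\<exists>d. 0 < d \<and> d \<le> D \<and> (lap_right F' (- x) d \<longlongrightarrow> L) at_top)"
    using assms(5) dominates_at_reflect[of F \<Phi> x] by (auto simp: F'_def \<Phi>'_def)
  then have "ereal L \<le> Liminf at_top (\<lambda>s. ereal (lap_right (\<lambda>y. F' y + \<Phi>' y) (- x) D s))"
    by (rule Liminf_lap_right_add_ge[OF cF' c\<Phi>' \<open>mono \<Phi>'\<close> \<open>0 < D\<close>])
  moreover have "lap_left (\<lambda>y. F y + \<Phi> y) x D s = lap_right (\<lambda>y. F' y + \<Phi>' y) (- x) D s" for s
    by (simp add: lap_left_eq_lap_right_reflect F'_def \<Phi>'_def)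
  ultimately show ?thesis
    by simp
qed

lemma laplace_major_add_dominating:
  fixes F \<Phi> f :: "real \<Rightarrow> real"
  assumes cF: "continuous_on UNIV F" and c\<Phi>: "continuous_on UNIV \<Phi>" and "mono \<Phi>"
    and regular: "\<And>x. x \<in> {a..b} \<Longrightarrow> laplace_deriv a b F x (f x) \<or> dominates_at F \<Phi> x"
  shows "laplace_major f a b (\<lambda>y. F y + \<Phi> y)"
  unfolding laplace_major_def
proof (intro conjI ballI)
  show "continuous_on {a..b} (\<lambda>y. F y + \<Phi> y)"
    by (intro continuous_on_add continuous_on_subset[OF cF] continuous_on_subset[OF c\<Phi>]) auto
  fix x assume x: "x \<in> {a..b}"
  have "ereal (f x) \<le> Liminf at_top (\<lambda>s. ereal (lap_right (\<lambda>y. F y + \<Phi> y) x (b - x) s))"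
    if "x < b"
    using regular[OF x] laplace_deriv_right_lim[of a b F x "f x"] that
    by (intro Liminf_lap_right_add_ge[OF cF c\<Phi> \<open>mono \<Phi>\<close>]) auto
  moreover have "ereal (f x) \<le> Liminf at_top (\<lambda>s. ereal (lap_left (\<lambda>y. F y + \<Phi> y) x (x - a) s))"
    if "a < x"
    using regular[OF x] laplace_deriv_left_lim[of a b F x "f x"] that
    by (intro Liminf_lap_left_add_ge[OF cF c\<Phi> \<open>mono \<Phi>\<close>]) auto
  ultimately show "ereal (f x) \<le> lower_LD a b (\<lambda>y. F y + \<Phi> y) x"
    unfolding lower_LD_def by auto
  then show "- \<infinity> < lower_LD a b (\<lambda>y. F y + \<Phi> y) x"
    by (cases "lower_LD a b (\<lambda>y. F y + \<Phi> y) x") auto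
qed

lemma upper_LD_uminus: "upper_LD a b (\<lambda>y. - U y) x = - lower_LD a b U x"
proof -
  have max_uminus: "max (- p) (- q) = - min p q" for p q :: ereal
    by (cases "p \<le> q") (auto simp: max_def min_def)
  have "upper_LD a b (\<lambda>y. - U y) x =
      max (- (if x < b then Liminf at_top (\<lambda>s. ereal (lap_right U x (b - x) s)) else \<infinity>))
          (- (if a < x then Liminf at_top (\<lambda>s. ereal (lap_left U x (x - a) s)) else \<infinity>))"
    unfolding upper_LD_def lap_right_uminus lap_left_uminus
    by (simp add: ereal_Limsup_uminus[symmetric])
  then show ?thesis
    unfolding lower_LD_def max_uminus .
qed

lemma laplace_minor_uminus:
  assumes "laplace_major (\<lambda>x. - f x) a b U"
  shows "laplace_minor f a b (\<lambda>x. - U x)"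
  unfolding laplace_minor_def upper_LD_uminus
proof (intro conjI ballI)
  show "continuous_on {a..b} (\<lambda>x. - U x)"
    using assms unfolding laplace_major_def by (auto intro: continuous_intros)
  fix x assume "x \<in> {a..b}"
  with assms have "ereal (- f x) \<le> lower_LD a b U x" "- \<infinity> < lower_LD a b U x"
    unfolding laplace_major_def by auto
  then show "- lower_LD a b U x \<le> ereal (f x)" "- lower_LD a b U x < \<infinity>"
    by (auto simp: ereal_uminus_le_reorder) (cases "lower_LD a b U x"; simp)
qed

lemma laplace_deriv_uminus:
  "laplace_deriv a b F x L \<Longrightarrow> laplace_deriv a b (\<lambda>y. - F y) x (- L)"
  unfolding laplace_deriv_def lap_right_uminus lap_left_uminus by (auto intro: tendsto_minus)

lemma SUP_ereal_eqI:
  assumes "\<And>x. x \<in> A \<Longrightarrow> g x \<le> I" and "\<And>e. 0 < e \<Longrightarrow> \<exists>x\<in>A. I - e \<le> g x"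
  shows "(SUP x\<in>A. ereal (g x)) = ereal I"
proof (rule antisym)
  show "(SUP x\<in>A. ereal (g x)) \<le> ereal I"
    using assms(1) by (intro SUP_least) simp
  show "ereal I \<le> (SUP x\<in>A. ereal (g x))"
  proof (rule ereal_le_epsilon2)
    fix e :: real assume "0 < e"
    then obtain x where "x \<in> A" "I - e \<le> g x"
      using assms(2) by blast
    then have "ereal I \<le> ereal (g x) + ereal e"
      by simp
    also have "\<dots> \<le> (SUP x\<in>A. ereal (g x)) + ereal e"
      using \<open>x \<in> A\<close> by (intro add_right_mono SUP_upper)
    finally show "ereal I \<le> (SUP x\<in>A. ereal (g x)) + ereal e" .
  qed
qed

lemma INF_ereal_eqI:
  assumes "\<And>x. x \<in> A \<Longrightarrow> I \<le> g x" and "\<And>e. 0 < e \<Longrightarrow> \<exists>x\<in>A. g x \<le> I + e"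
  shows "(INF x\<in>A. ereal (g x)) = ereal I"
proof (rule antisym)
  show "ereal I \<le> (INF x\<in>A. ereal (g x))"
    using assms(1) by (intro INF_greatest) simp
  show "(INF x\<in>A. ereal (g x)) \<le> ereal I"
  proof (rule ereal_le_epsilon2)
    fix e :: real assume "0 < e"
    then obtain x where "x \<in> A" "g x \<le> I + e"
      using assms(2) by blast
    then have "(INF x\<in>A. ereal (g x)) \<le> ereal (g x)"
      by (intro INF_lower)
    also have "\<dots> \<le> ereal I + ereal e"
      using \<open>g x \<le> I + e\<close> by simp
    finally show "(INF x\<in>A. ereal (g x)) \<le> ereal I + ereal e" .
  qed
qed

lemma laplace_has_integralI:
  assumes "a < b"
    and major: "\<And>e. 0 < e \<Longrightarrow> \<exists>U. laplace_major f a b U \<and> U b - U a \<le> I + e"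
    and minor: "\<And>e. 0 < e \<Longrightarrow> \<exists>V. laplace_minor f a b V \<and> I - e \<le> V b - V a"
  shows "laplace_has_integral f a b I"
proof -
  have minor_le: "V b - V a \<le> I" if V: "laplace_minor f a b V" for V
  proof (rule field_le_epsilon)
    fix e :: real assume "0 < e"
    then obtain U where U: "laplace_major f a b U" "U b - U a \<le> I + e"
      using major by blast
    with laplace_minor_le_major[OF \<open>a < b\<close> U(1) V] show "V b - V a \<le> I + e"
      by linarith
  qed
  have major_ge: "I \<le> U b - U a" if U: "laplace_major f a b U" for U
  proof (rule field_le_epsilon)
    fix e :: real assume "0 < e"
    then obtain V where V: "laplace_minor f a b V" "I - e \<le> V b - V a"
      using minor by blast
    with laplace_minor_le_major[OF \<open>a < b\<close> U V(1)] show "I \<le> U b - U a + e"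
      by linarith
  qed
  show ?thesis
    unfolding laplace_has_integral_def
  proof
    show "(SUP V\<in>{V. laplace_minor f a b V}. ereal (V b - V a)) = ereal I"
      using minor_le minor by (intro SUP_ereal_eqI) auto
    show "(INF U\<in>{U. laplace_major f a b U}. ereal (U b - U a)) = ereal I"
      using major_ge major by (intro INF_ereal_eqI) auto
  qed
qed

lemma laplace_has_integral_increment:
  fixes F f :: "real \<Rightarrow> real"
  assumes "a < b" and cF: "continuous_on UNIV F" and "countable C"
    and deriv: "\<And>x. x \<in> {a..b} - C \<Longrightarrow> laplace_deriv a b F x (f x)"
  shows "laplace_has_integral f a b (F b - F a)"
proof -
  have approx: "\<exists>\<Phi>. laplace_major f a b (\<lambda>y. F y + \<Phi> y) \<and> laplace_minor f a b (\<lambda>y. F y - \<Phi> y)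
      \<and> \<Phi> b - \<Phi> a \<le> e" if "0 < e" for e
  proof -
    obtain \<Phi> where c\<Phi>: "continuous_on UNIV \<Phi>" and "mono \<Phi>" and incr: "\<Phi> b - \<Phi> a \<le> e"
      and dom: "\<And>c. c \<in> C \<Longrightarrow> dominates_at F \<Phi> c"
      using dominating_mono_exists[OF cF \<open>countable C\<close> \<open>0 < e\<close>] by metis
    have "laplace_major f a b (\<lambda>y. F y + \<Phi> y)"
      using deriv dom by (intro laplace_major_add_dominating cF c\<Phi> \<open>mono \<Phi>\<close>) blast
    \<comment> \<open>\<open>dominates_at\<close> only sees \<open>\<bar>F (c \<plusminus> t) - F c\<bar>\<close>, so \<open>\<Phi>\<close> serves for \<open>- F\<close> as well\<close>
    moreover have "laplace_major (\<lambda>x. - f x) a b (\<lambda>y. - F y + \<Phi> y)"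
      using deriv dom laplace_deriv_uminus dominates_at_uminus
      by (intro laplace_major_add_dominating continuous_on_minus cF c\<Phi> \<open>mono \<Phi>\<close>) blast
    from laplace_minor_uminus[OF this] have "laplace_minor f a b (\<lambda>y. F y - \<Phi> y)"
      by simp
    ultimately show ?thesis
      using incr by blast
  qed
  show ?thesis
  proof (rule laplace_has_integralI[OF \<open>a < b\<close>])
    fix e :: real assume "0 < e"
    then obtain \<Phi> where \<Phi>: "laplace_major f a b (\<lambda>y. F y + \<Phi> y)"
      "laplace_minor f a b (\<lambda>y. F y - \<Phi> y)" "\<Phi> b - \<Phi> a \<le> e"
      using approx by blast
    show "\<exists>U. laplace_major f a b U \<and> U b - U a \<le> F b - F a + e"
      using \<Phi>(1,3) by (intro exI[of _ "\<lambda>y. F y + \<Phi> y"]) simp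
    show "\<exists>V. laplace_minor f a b V \<and> F b - F a - e \<le> V b - V a"
      using \<Phi>(2,3) by (intro exI[of _ "\<lambda>y. F y - \<Phi> y"]) simp
  qed
qed

lemma laplace_deriv_cong:
  assumes "\<And>y. y \<in> {a..b} \<Longrightarrow> F y = G y" and "x \<in> {a..b}"
  shows "laplace_deriv a b F x L \<longleftrightarrow> laplace_deriv a b G x L"
proof -
  have "lap_right F x d = lap_right G x d" if "x + d \<le> b" for d
    using assms that by (intro ext lap_right_cong) auto
  moreover have "lap_left F x d = lap_left G x d" if "a \<le> x - d" for d
    using assms that by (intro ext lap_left_cong) auto
  ultimately show ?thesis
    unfolding laplace_deriv_def by (simp cong: conj_cong)
qed

lemma laplace_deriv_restrict:
  assumes deriv: "laplace_deriv a b F x L" and cont: "continuous_on {a..b} F"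
    and "a \<le> x" "e \<le> b"
  shows "laplace_deriv a e F x L"
  unfolding laplace_deriv_def
proof (intro conjI impI)
  assume "x < e"
  then obtain d0 where "0 < d0" "x + d0 \<le> b" and lim: "(lap_right F x d0 \<longlongrightarrow> L) at_top"
    using deriv \<open>e \<le> b\<close> unfolding laplace_deriv_def by auto
  define d where "d = min d0 (e - x)"
  have d: "0 < d" "d \<le> d0" "x + d \<le> e"
    using \<open>0 < d0\<close> \<open>x < e\<close> by (auto simp: d_def)
  have "continuous_on {x..x+d0} F"
    using \<open>a \<le> x\<close> \<open>x + d0 \<le> b\<close> by (intro continuous_on_subset[OF cont]) auto
  with lim d have "(lap_right F x d \<longlongrightarrow> L) at_top"
    using lap_right_tendsto_width_iff by blast
  with d show "\<exists>d. 0 < d \<and> x + d \<le> e \<and> (lap_right F x d \<longlongrightarrow> L) at_top"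
    by blast
next
  assume "a < x"
  then show "\<exists>d. 0 < d \<and> a \<le> x - d \<and> (lap_left F x d \<longlongrightarrow> L) at_top"
    using deriv unfolding laplace_deriv_def by blast
qed

theorem theorem5p3:
  fixes F f :: "real \<Rightarrow> real" and a b :: real and C :: "real set"
  assumes "a < b"
    and "continuous_on {a..b} F"
    and "countable C"
    and "\<forall>x\<in>{a..b} - C. laplace_deriv a b F x (f x)"
  shows "laplace_integrable f a b \<and>
         (\<forall>x\<in>{a<..b}. laplace_has_integral f a x (F x - F a))"
proof -
  define G where "G y = F (max a (min b y))" for y
  have cG: "continuous_on UNIV G"
    unfolding G_def using \<open>a < b\<close>
    by (intro continuous_on_compose2[OF assms(2)] continuous_intros) auto
  have G_eq: "G y = F y" if "y \<in> {a..b}" for y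
    using that by (simp add: G_def)
  have "laplace_has_integral f a e (F e - F a)" if e: "e \<in> {a<..b}" for e
  proof -
    have "laplace_deriv a e G x (f x)" if "x \<in> {a..e} - C" for x
    proof (rule laplace_deriv_restrict)
      show "laplace_deriv a b G x (f x)"
        using assms(4) laplace_deriv_cong[OF G_eq] that e by auto
      show "continuous_on {a..b} G"
        using cG by (rule continuous_on_subset) simp
    qed (use that e in auto)
    then have "laplace_has_integral f a e (G e - G a)"
      using e by (intro laplace_has_integral_increment[OF _ cG \<open>countable C\<close>]) auto
    with e show ?thesis
      by (simp add: G_eq)
  qed
  with \<open>a < b\<close> show ?thesis
    unfolding laplace_integrable_def by auto
qed

end
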